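(* Let $W$ be a subcomplex of a simplicial complex $K$ on $[m]$, and let $\mathcal I_{K\setminus W}$ be the kernel of the natural quotient map $\mathbb Z[K]\to\mathbb Z[W]$. Then the annihilator $(0:_{\mathbb Z[K]}\mathcal I_{K\setminus W})$ is the ideal generated by the monomials $x_\sigma$ with $\sigma\in W\setminus\overline{K\setminus W}$.
   Context: $\mathbb Z[K]=\mathbb Z[x_1,\dots,x_m]/\langle x_\sigma:\sigma\notin K\rangle$ is the Stanley–Reisner ring, $x_\sigma=\prod_{i\in\sigma}x_i$. For a subset $Y$ of a simplicial complex, $\overline Y$ denotes the smallest subcomplex containing $Y$ (all subsets of members of $Y$). *)

theory Defs
  imports "HOL-Library.Poly_Mapping" "HOL-Algebra.QuotRing"
begin

definition simplicial_complex :: "nat \<Rightarrow> nat set set \<Rightarrow> bool" where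
  "simplicial_complex m K \<longleftrightarrow> K \<subseteq> Pow {1..m} \<and> (\<forall>\<sigma>\<in>K. \<forall>\<tau>. \<tau> \<subseteq> \<sigma> \<longrightarrow> \<tau> \<in> K)"

definition cl :: "nat set set \<Rightarrow> nat set set" where
  "cl Y = {\<tau>. \<exists>\<sigma>\<in>Y. \<tau> \<subseteq> \<sigma>}"

(* multivariate integer polynomials: monomials are exponent vectors nat \<Rightarrow>\<^sub>0 nat *)
type_synonym zpoly = "(nat \<Rightarrow>\<^sub>0 nat) \<Rightarrow>\<^sub>0 int"

definition var :: "nat \<Rightarrow> zpoly" where
  "var i = Poly_Mapping.single (Poly_Mapping.single i 1) 1"

definition xmon :: "nat set \<Rightarrow> zpoly" where
  "xmon \<sigma> = (\<Prod>i\<in>\<sigma>. var i)"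

(* the polynomial ring Z[x_1,...,x_m] as a HOL-Algebra ring *)
definition ZPoly :: "nat \<Rightarrow> zpoly ring" where
  "ZPoly m = \<lparr>carrier = {p :: zpoly. \<forall>a\<in>Poly_Mapping.keys p. Poly_Mapping.keys a \<subseteq> {1..m}},
              mult = (*), one = 1, zero = 0, add = (+)\<rparr>"

definition SR_ideal :: "nat \<Rightarrow> nat set set \<Rightarrow> zpoly set" where
  "SR_ideal m K = Idl\<^bsub>ZPoly m\<^esub> {xmon \<sigma> | \<sigma>. \<sigma> \<subseteq> {1..m} \<and> \<sigma> \<notin> K}"

definition SR_ring :: "nat \<Rightarrow> nat set set \<Rightarrow> zpoly set ring" where
  "SR_ring m K = ZPoly m Quot SR_ideal m K"

definition SR_xmon :: "nat \<Rightarrow> nat set set \<Rightarrow> nat set \<Rightarrow> zpoly set" where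
  "SR_xmon m K \<sigma> = SR_ideal m K +>\<^bsub>ZPoly m\<^esub> xmon \<sigma>"

(* natural quotient map Z[K] \<rightarrow> Z[W] (for W \<subseteq> K): the coset f + I_K goes to f + I_W *)
definition SR_restrict :: "nat \<Rightarrow> nat set set \<Rightarrow> zpoly set \<Rightarrow> zpoly set" where
  "SR_restrict m W C = SR_ideal m W <+>\<^bsub>ZPoly m\<^esub> C"

definition annihilator :: "('a, 'b) ring_scheme \<Rightarrow> 'a set \<Rightarrow> 'a set" where
  "annihilator R J = {a \<in> carrier R. \<forall>b\<in>J. a \<otimes>\<^bsub>R\<^esub> b = \<zero>\<^bsub>R\<^esub>}"

end

theory Submission
  imports Defs
begin

text \<open>
  Write \<open>\<int>[K] = P / I\<^sub>K\<close> with \<open>P\<close> the polynomial ring; the Stanley--Reisner ideal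
  \<open>I\<^sub>K\<close> consists of the polynomials all of whose terms have non-face support. The kernel of
  \<open>\<int>[K] \<rightarrow> \<int>[W]\<close> is \<open>I\<^sub>W / I\<^sub>K\<close>, so the annihilator is the image of
  \<open>{g. g I\<^sub>W \<subseteq> I\<^sub>K}\<close>. If \<open>g\<close> is such a polynomial and \<open>x\<^sup>a\<close> is a term of \<open>g\<close>
  whose support lies in a face \<open>\<sigma> \<in> K - W\<close>, then \<open>x\<^sub>\<sigma> \<in> I\<^sub>W\<close>, but \<open>g x\<^sub>\<sigma>\<close> contains the
  term \<open>x\<^sup>a x\<^sub>\<sigma>\<close> with face support \<open>\<sigma>\<close>. Hence the terms of \<open>g\<close> with face support are
  supported on faces in \<open>W - cl (K - W)\<close>, and the remaining terms lie in \<open>I\<^sub>K\<close>. Conversely,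
  a term divisible by \<open>x\<^sub>\<sigma>\<close>, \<open>\<sigma> \<in> W - cl (K - W)\<close>, times a term with support outside
  \<open>W\<close> has support outside \<open>W\<close> containing \<open>\<sigma>\<close>, hence not in \<open>K\<close>.
\<close>

section \<open>Finitely supported functions\<close>

lemma keys_add_exponents:
  "Poly_Mapping.keys ((a :: 'a \<Rightarrow>\<^sub>0 nat) + b) = Poly_Mapping.keys a \<union> Poly_Mapping.keys b"
  by (auto simp: in_keys_iff lookup_add)

lemma keys_multE:
  assumes "c \<in> Poly_Mapping.keys (p * q)"
  obtains a b where "a \<in> Poly_Mapping.keys p" "b \<in> Poly_Mapping.keys q" "c = a + b"
  using keys_mult[of p q] assms by blast

lemma poly_mapping_sum_single:
  "p = (\<Sum>a\<in>Poly_Mapping.keys p. Poly_Mapping.single a (Poly_Mapping.lookup p a))"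
  by (rule poly_mapping_eqI) (simp add: lookup_sum lookup_single when_def in_keys_iff)

lemma poly_mapping_split_keys:
  fixes p :: "'a \<Rightarrow>\<^sub>0 'b::ab_group_add"
  obtains q where "Poly_Mapping.keys q \<subseteq> {a \<in> Poly_Mapping.keys p. P a}"
    and "Poly_Mapping.keys (p - q) \<subseteq> {a \<in> Poly_Mapping.keys p. \<not> P a}"
proof
  define t where "t a = Poly_Mapping.single a (Poly_Mapping.lookup p a)" for a
  let ?A = "{a \<in> Poly_Mapping.keys p. P a}" and ?B = "{a \<in> Poly_Mapping.keys p. \<not> P a}"
  have keys_t: "Poly_Mapping.keys (t a) \<subseteq> {a}" for a by (simp add: t_def)
  have "?A \<union> ?B = Poly_Mapping.keys p" by auto
  then have "p = sum t (?A \<union> ?B)"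
    unfolding t_def by (simp flip: poly_mapping_sum_single)
  also have "\<dots> = sum t ?A + sum t ?B"
    by (rule sum.union_disjoint) auto
  finally have "p = sum t ?A + sum t ?B" .
  then have "p - sum t ?A = sum t ?B" by (simp add: algebra_simps)
  then show "Poly_Mapping.keys (p - sum t ?A) \<subseteq> ?B"
    using keys_sum[of t ?B] keys_t by auto
  show "Poly_Mapping.keys (sum t ?A) \<subseteq> ?A"
    using keys_sum[of t ?A] keys_t by auto
qed

lemma lookup_mult_single_shift:
  fixes g :: "'a::cancel_comm_monoid_add \<Rightarrow>\<^sub>0 'b::semiring_1"
  shows "Poly_Mapping.lookup (g * Poly_Mapping.single e 1) (a + e) = Poly_Mapping.lookup g a"
proof -
  have "(\<lambda>b. (Poly_Mapping.lookup (Poly_Mapping.single e 1) b when a + e = c + b))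
      = (\<lambda>b. ((1::'b) when c = a) when b = e)" for c
    by (auto simp: fun_eq_iff lookup_single when_def)
  then show ?thesis
    by (simp only: lookup_mult mult_when mult_1_right Sum_any_when_equal)
qed

section \<open>Ideals of quotient rings\<close>

lemma (in ring) rcos_eq_ideal_iff:
  assumes "ideal I R" "x \<in> carrier R"
  shows "I +> x = I \<longleftrightarrow> x \<in> I"
  using ideal.rcos_const_imp_mem[OF assms] a_rcos_zero[OF assms(1)] by blast

lemma (in ring) carrier_quotient_ring: "carrier (R Quot I) = (+>) I ` carrier R"
  unfolding FactRing_def A_RCOSETS_def' by auto

lemma zero_quotient_ring: "\<zero>\<^bsub>R Quot I\<^esub> = I"
  by (simp add: FactRing_def)

lemma (in ring) set_add_rcos_absorb:
  assumes "ideal I R" "ideal J R" "I \<subseteq> J" "x \<in> carrier R"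
  shows "J <+> (I +> x) = J +> x"
proof -
  interpret I: ideal I R by (rule assms(1))
  interpret J: ideal J R by (rule assms(2))
  have "J <+> I = J"
  proof
    show "J <+> I \<subseteq> J"
      using assms(3) by (auto simp: set_add_def')
    show "J \<subseteq> J <+> I"
      by (force simp: set_add_def' intro: bexI[of _ \<zero>])
  qed
  then show ?thesis
    using a_setmult_rcos_assoc[of J I x] assms(4) I.a_subset J.a_subset by simp
qed

lemma (in ring) a_kernel_quotient_map:
  assumes "ideal I R" "ideal J R" "I \<subseteq> J"
  shows "a_kernel (R Quot I) (R Quot J) (\<lambda>C. J <+> C) = (+>) I ` J"
proof -
  have "a_kernel (R Quot I) (R Quot J) (\<lambda>C. J <+> C) = {C \<in> (+>) I ` carrier R. J <+> C = J}"
    by (simp only: a_kernel_def' carrier_quotient_ring zero_quotient_ring)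
  also have "\<dots> = (+>) I ` {x \<in> carrier R. J <+> (I +> x) = J}"
    by (rule Compr_image_eq)
  also have "{x \<in> carrier R. J <+> (I +> x) = J} = J"
    using set_add_rcos_absorb[OF assms] rcos_eq_ideal_iff[OF assms(2)] ideal.Icarr[OF assms(2)]
    by auto
  finally show ?thesis .
qed

lemma (in ring) annihilator_quotient:
  assumes "ideal I R" "J \<subseteq> carrier R"
  shows "annihilator (R Quot I) ((+>) I ` J) = (+>) I ` {g \<in> carrier R. \<forall>f\<in>J. g \<otimes> f \<in> I}"
proof -
  interpret h: ring_hom_ring R "R Quot I" "(+>) I"
    by (rule ideal.rcos_ring_hom_ring[OF assms(1)])
  have annihilates_iff: "(I +> g) \<otimes>\<^bsub>R Quot I\<^esub> (I +> f) = I \<longleftrightarrow> g \<otimes> f \<in> I"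
    if "g \<in> carrier R" "f \<in> J" for g f
  proof -
    have "f \<in> carrier R" using that(2) assms(2) by blast
    then have "(I +> g) \<otimes>\<^bsub>R Quot I\<^esub> (I +> f) = I +> (g \<otimes> f)"
      using that(1) h.hom_mult by metis
    moreover have "I +> (g \<otimes> f) = I \<longleftrightarrow> g \<otimes> f \<in> I"
      using that(1) \<open>f \<in> carrier R\<close> by (intro rcos_eq_ideal_iff[OF assms(1)] m_closed)
    ultimately show ?thesis by simp
  qed
  have "annihilator (R Quot I) ((+>) I ` J)
      = {C \<in> (+>) I ` carrier R. \<forall>D\<in>(+>) I ` J. C \<otimes>\<^bsub>R Quot I\<^esub> D = I}"
    by (simp only: annihilator_def carrier_quotient_ring zero_quotient_ring)
  also have "\<dots> = (+>) I ` {g \<in> carrier R. \<forall>D\<in>(+>) I ` J. (I +> g) \<otimes>\<^bsub>R Quot I\<^esub> D = I}"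
    by (rule Compr_image_eq)
  also have "{g \<in> carrier R. \<forall>D\<in>(+>) I ` J. (I +> g) \<otimes>\<^bsub>R Quot I\<^esub> D = I}
      = {g \<in> carrier R. \<forall>f\<in>J. g \<otimes> f \<in> I}"
    using annihilates_iff by blast
  finally show ?thesis .
qed

lemma (in ring) rcos_image_eq_of_representatives:
  assumes "ideal I R" "J \<subseteq> G" "G \<subseteq> carrier R" "\<And>g. g \<in> G \<Longrightarrow> \<exists>j\<in>J. g \<ominus> j \<in> I"
  shows "(+>) I ` G = (+>) I ` J"
proof
  show "(+>) I ` J \<subseteq> (+>) I ` G" using assms(2) by blast
  show "(+>) I ` G \<subseteq> (+>) I ` J"
  proof
    fix C assume "C \<in> (+>) I ` G"
    then obtain g where g: "g \<in> G" "C = I +> g" by blast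
    then obtain j where j: "j \<in> J" "g \<ominus> j \<in> I" using assms(4) by blast
    then have "I +> g = I +> j"
      using quotient_eq_iff_same_a_r_cos[OF assms(1), of g j] g(1) assms(2,3) by blast
    then show "C \<in> (+>) I ` J" using j(1) g(2) by blast
  qed
qed

lemma (in ring) genideal_rcos_image:
  assumes I: "ideal I R" and S: "S \<subseteq> carrier R"
  shows "Idl\<^bsub>R Quot I\<^esub> ((+>) I ` S) = (+>) I ` (Idl\<^bsub>R\<^esub> S)"
proof
  interpret Q: ring "R Quot I" by (rule ideal.quotient_is_ring[OF I])
  interpret h: ring_hom_ring R "R Quot I" "(+>) I" by (rule ideal.rcos_ring_hom_ring[OF I])
  show "Idl\<^bsub>R Quot I\<^esub> ((+>) I ` S) \<subseteq> (+>) I ` (Idl\<^bsub>R\<^esub> S)"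
    by (rule Q.genideal_minimal[OF ring_ideal_imp_quot_ideal[OF I genideal_ideal[OF S]]])
       (use genideal_self[OF S] in blast)
  have hS: "(+>) I ` S \<subseteq> carrier (R Quot I)"
    using S h.hom_closed by blast
  have "Idl\<^bsub>R\<^esub> S \<subseteq> {r \<in> carrier R. I +> r \<in> Idl\<^bsub>R Quot I\<^esub> ((+>) I ` S)}"
    by (rule genideal_minimal[OF h.ideal_vimage[OF Q.genideal_ideal[OF hS]]])
       (use S Q.genideal_self[OF hS] in blast)
  then show "(+>) I ` (Idl\<^bsub>R\<^esub> S) \<subseteq> Idl\<^bsub>R Quot I\<^esub> ((+>) I ` S)"
    by blast
qed

section \<open>The polynomial ring\<close>

lemma mem_carrier_ZPoly_iff:
  "p \<in> carrier (ZPoly m) \<longleftrightarrow> (\<forall>a\<in>Poly_Mapping.keys p. Poly_Mapping.keys a \<subseteq> {1..m})"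
  by (simp add: ZPoly_def)

lemma ZPoly_simps [simp]:
  "mult (ZPoly m) = (*)" "add (ZPoly m) = (+)" "one (ZPoly m) = 1" "zero (ZPoly m) = 0"
  by (simp_all add: ZPoly_def)

lemma ZPoly_add_closed:
  "p \<in> carrier (ZPoly m) \<Longrightarrow> q \<in> carrier (ZPoly m) \<Longrightarrow> p + q \<in> carrier (ZPoly m)"
  unfolding mem_carrier_ZPoly_iff using keys_add[of p q] by blast

lemma ZPoly_mult_closed:
  "p \<in> carrier (ZPoly m) \<Longrightarrow> q \<in> carrier (ZPoly m) \<Longrightarrow> p * q \<in> carrier (ZPoly m)"
  unfolding mem_carrier_ZPoly_iff by (metis Un_subset_iff keys_add_exponents keys_multE)

lemma ZPoly_uminus_closed: "p \<in> carrier (ZPoly m) \<Longrightarrow> - p \<in> carrier (ZPoly m)"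
  and ZPoly_zero_closed: "0 \<in> carrier (ZPoly m)"
  and ZPoly_one_closed: "1 \<in> carrier (ZPoly m)"
  by (simp_all add: mem_carrier_ZPoly_iff)

lemma cring_ZPoly: "cring (ZPoly m)"
proof (rule cringI)
  show "abelian_group (ZPoly m)"
    by (rule abelian_groupI) (auto simp: ZPoly_add_closed ZPoly_zero_closed algebra_simps
                                   intro!: bexI[of _ "- _"] ZPoly_uminus_closed)
  show "comm_monoid (ZPoly m)"
    by (rule comm_monoidI) (auto simp: ZPoly_mult_closed ZPoly_one_closed algebra_simps)
qed (auto simp: algebra_simps)

lemma a_inv_ZPoly:
  assumes "q \<in> carrier (ZPoly m)"
  shows "\<ominus>\<^bsub>ZPoly m\<^esub> q = - q"
proof -
  interpret cring "ZPoly m" by (rule cring_ZPoly)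
  show ?thesis
    by (rule minus_equality) (use assms in \<open>auto simp: mem_carrier_ZPoly_iff\<close>)
qed

lemma a_minus_ZPoly: "q \<in> carrier (ZPoly m) \<Longrightarrow> p \<ominus>\<^bsub>ZPoly m\<^esub> q = p - q"
  by (simp add: a_minus_def a_inv_ZPoly)

lemma ideal_ZPoly_sum_closed:
  assumes "ideal I (ZPoly m)" "finite F" "\<And>x. x \<in> F \<Longrightarrow> f x \<in> I"
  shows "sum f F \<in> I"
  using assms(2,3)
proof (induction F rule: finite_induct)
  case empty
  then show ?case using additive_subgroup.zero_closed[OF ideal.axioms(1)[OF assms(1)]] by simp
next
  case (insert x F)
  then show ?case
    using additive_subgroup.a_closed[OF ideal.axioms(1)[OF assms(1)], of "f x" "sum f F"] by simp
qed

section \<open>Monomial ideals\<close>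

definition set_exponent :: "'a set \<Rightarrow> 'a \<Rightarrow>\<^sub>0 nat" where
  "set_exponent \<sigma> = (\<Sum>i\<in>\<sigma>. Poly_Mapping.single i 1)"

lemma lookup_set_exponent:
  "finite \<sigma> \<Longrightarrow> Poly_Mapping.lookup (set_exponent \<sigma>) i = (if i \<in> \<sigma> then 1 else 0)"
  by (simp add: set_exponent_def lookup_sum lookup_single when_def)

lemma keys_set_exponent: "finite \<sigma> \<Longrightarrow> Poly_Mapping.keys (set_exponent \<sigma>) = \<sigma>"
  by (auto simp: in_keys_iff lookup_set_exponent split: if_splits)

lemma xmon_eq_single: "finite \<sigma> \<Longrightarrow> xmon \<sigma> = Poly_Mapping.single (set_exponent \<sigma>) 1"
proof (induction \<sigma> rule: finite_induct)
  case empty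
  then show ?case by (simp add: xmon_def set_exponent_def)
next
  case (insert x F)
  then show ?case by (simp add: xmon_def set_exponent_def var_def mult_single add.commute)
qed

lemma xmon_mem_carrier_ZPoly: "\<sigma> \<subseteq> {1..m} \<Longrightarrow> xmon \<sigma> \<in> carrier (ZPoly m)"
  using finite_subset[of \<sigma> "{1..m}"]
  by (auto simp: xmon_eq_single mem_carrier_ZPoly_iff keys_set_exponent)

lemma single_eq_mult_xmon:
  assumes "finite \<sigma>" "\<sigma> \<subseteq> Poly_Mapping.keys a"
  shows "Poly_Mapping.single a c = Poly_Mapping.single (a - set_exponent \<sigma>) c * xmon \<sigma>"
proof -
  have "a - set_exponent \<sigma> + set_exponent \<sigma> = a"
    by (rule poly_mapping_eqI)
       (use assms in \<open>auto simp: lookup_add lookup_minus lookup_set_exponent in_keys_iff\<close>)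
  then show ?thesis
    using assms(1) by (simp add: xmon_eq_single mult_single)
qed

definition monomial_ideal :: "nat \<Rightarrow> nat set set \<Rightarrow> zpoly set" where
  "monomial_ideal m S =
     {p \<in> carrier (ZPoly m). \<forall>a\<in>Poly_Mapping.keys p. \<exists>\<sigma>\<in>S. \<sigma> \<subseteq> Poly_Mapping.keys a}"

lemma ideal_monomial_ideal: "ideal (monomial_ideal m S) (ZPoly m)"
proof (rule idealI)
  interpret R: cring "ZPoly m" by (rule cring_ZPoly)
  show "ring (ZPoly m)" by (rule R.ring_axioms)
  show "subgroup (monomial_ideal m S) (add_monoid (ZPoly m))"
  proof (rule group.subgroupI[OF R.a_group])
    show "monomial_ideal m S \<subseteq> carrier (add_monoid (ZPoly m))"
      by (auto simp: monomial_ideal_def)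
    show "monomial_ideal m S \<noteq> {}"
      using ZPoly_zero_closed by (auto simp: monomial_ideal_def)
  next
    fix p assume p: "p \<in> monomial_ideal m S"
    then have "inv\<^bsub>add_monoid (ZPoly m)\<^esub> p = - p"
      using a_inv_ZPoly[of p m] by (simp add: monomial_ideal_def a_inv_def)
    with p show "inv\<^bsub>add_monoid (ZPoly m)\<^esub> p \<in> monomial_ideal m S"
      by (simp add: monomial_ideal_def ZPoly_uminus_closed)
  next
    fix p q assume "p \<in> monomial_ideal m S" "q \<in> monomial_ideal m S"
    then show "p \<otimes>\<^bsub>add_monoid (ZPoly m)\<^esub> q \<in> monomial_ideal m S"
      using keys_add[of p q] by (auto simp: monomial_ideal_def ZPoly_add_closed)
  qed
next
  fix p q assume p: "p \<in> monomial_ideal m S" and q: "q \<in> carrier (ZPoly m)"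
  show "q \<otimes>\<^bsub>ZPoly m\<^esub> p \<in> monomial_ideal m S"
    using p q unfolding monomial_ideal_def
    by (auto simp: ZPoly_mult_closed elim!: keys_multE) (metis keys_add_exponents sup.coboundedI2)
  show "p \<otimes>\<^bsub>ZPoly m\<^esub> q \<in> monomial_ideal m S"
    using p q unfolding monomial_ideal_def
    by (auto simp: ZPoly_mult_closed elim!: keys_multE) (metis keys_add_exponents sup.coboundedI1)
qed

lemma genideal_xmon_eq_monomial_ideal:
  assumes S: "S \<subseteq> Pow {1..m}"
  shows "Idl\<^bsub>ZPoly m\<^esub> (xmon ` S) = monomial_ideal m S"
proof
  interpret R: cring "ZPoly m" by (rule cring_ZPoly)
  have S_finite: "finite \<sigma>" if "\<sigma> \<in> S" for \<sigma>
    using that S finite_subset[of \<sigma> "{1..m}"] by blast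
  have S_carrier: "xmon ` S \<subseteq> carrier (ZPoly m)"
    using S xmon_mem_carrier_ZPoly by blast
  show "Idl\<^bsub>ZPoly m\<^esub> (xmon ` S) \<subseteq> monomial_ideal m S"
  proof (rule R.genideal_minimal[OF ideal_monomial_ideal], safe)
    fix \<sigma> assume "\<sigma> \<in> S"
    then show "xmon \<sigma> \<in> monomial_ideal m S"
      using S_carrier S_finite[of \<sigma>]
      by (auto simp: monomial_ideal_def xmon_eq_single keys_set_exponent)
  qed
  show "monomial_ideal m S \<subseteq> Idl\<^bsub>ZPoly m\<^esub> (xmon ` S)"
  proof
    fix p assume p: "p \<in> monomial_ideal m S"
    have "Poly_Mapping.single a (Poly_Mapping.lookup p a) \<in> Idl\<^bsub>ZPoly m\<^esub> (xmon ` S)"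
      if a: "a \<in> Poly_Mapping.keys p" for a
    proof -
      obtain \<sigma> where \<sigma>: "\<sigma> \<in> S" "\<sigma> \<subseteq> Poly_Mapping.keys a"
        using p a by (auto simp: monomial_ideal_def)
      have "Poly_Mapping.keys (a - set_exponent \<sigma>) \<subseteq> Poly_Mapping.keys a"
        by (auto simp: in_keys_iff lookup_minus)
      then have "Poly_Mapping.single (a - set_exponent \<sigma>) (Poly_Mapping.lookup p a) \<in> carrier (ZPoly m)"
        using p a by (auto simp: monomial_ideal_def mem_carrier_ZPoly_iff)
      moreover have "xmon \<sigma> \<in> Idl\<^bsub>ZPoly m\<^esub> (xmon ` S)"
        using R.genideal_self[OF S_carrier] \<sigma>(1) by blast
      ultimately show ?thesis
        using ideal.I_l_closed[OF R.genideal_ideal[OF S_carrier]]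
        by (simp add: single_eq_mult_xmon[OF S_finite[OF \<sigma>(1)] \<sigma>(2)])
    qed
    then show "p \<in> Idl\<^bsub>ZPoly m\<^esub> (xmon ` S)"
      by (subst poly_mapping_sum_single)
         (rule ideal_ZPoly_sum_closed[OF R.genideal_ideal[OF S_carrier] finite_keys])
  qed
qed

lemma SR_ideal_eq:
  assumes K: "simplicial_complex m K"
  shows "SR_ideal m K = {p \<in> carrier (ZPoly m). \<forall>a\<in>Poly_Mapping.keys p. Poly_Mapping.keys a \<notin> K}"
proof -
  let ?N = "{\<sigma>. \<sigma> \<subseteq> {1..m} \<and> \<sigma> \<notin> K}"
  have "{xmon \<sigma> | \<sigma>. \<sigma> \<subseteq> {1..m} \<and> \<sigma> \<notin> K} = xmon ` ?N"
    by blast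
  then have "SR_ideal m K = monomial_ideal m ?N"
    unfolding SR_ideal_def by (simp add: genideal_xmon_eq_monomial_ideal subset_eq)
  also have "\<dots> = {p \<in> carrier (ZPoly m). \<forall>a\<in>Poly_Mapping.keys p. Poly_Mapping.keys a \<notin> K}"
  proof -
    have "(\<exists>\<sigma>\<in>?N. \<sigma> \<subseteq> Poly_Mapping.keys a) \<longleftrightarrow> Poly_Mapping.keys a \<notin> K"
      if "Poly_Mapping.keys a \<subseteq> {1..m}" for a
      using that K unfolding simplicial_complex_def by blast
    then show ?thesis
      unfolding monomial_ideal_def mem_carrier_ZPoly_iff by blast
  qed
  finally show ?thesis .
qed

lemma ideal_SR_ideal: "ideal (SR_ideal m K) (ZPoly m)"
proof -
  interpret R: cring "ZPoly m" by (rule cring_ZPoly)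
  show ?thesis
    unfolding SR_ideal_def by (rule R.genideal_ideal) (use xmon_mem_carrier_ZPoly in blast)
qed

lemma SR_ideal_antimono:
  assumes "simplicial_complex m K" "simplicial_complex m W" "W \<subseteq> K"
  shows "SR_ideal m K \<subseteq> SR_ideal m W"
  using assms by (auto simp: SR_ideal_eq)

lemma genideal_SR_xmon:
  assumes "S \<subseteq> Pow {1..m}"
  shows "Idl\<^bsub>SR_ring m K\<^esub> (SR_xmon m K ` S) = (+>\<^bsub>ZPoly m\<^esub>) (SR_ideal m K) ` monomial_ideal m S"
proof -
  interpret P: cring "ZPoly m" by (rule cring_ZPoly)
  have "xmon ` S \<subseteq> carrier (ZPoly m)" using assms xmon_mem_carrier_ZPoly by blast
  moreover have "SR_xmon m K ` S = (+>\<^bsub>ZPoly m\<^esub>) (SR_ideal m K) ` (xmon ` S)"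
    by (simp add: SR_xmon_def image_image)
  ultimately show ?thesis
    using P.genideal_rcos_image[OF ideal_SR_ideal] genideal_xmon_eq_monomial_ideal[OF assms]
    by (simp add: SR_ring_def)
qed

section \<open>The annihilator of the restriction kernel\<close>

lemma monomial_ideal_annihilates_SR_ideal:
  assumes K: "simplicial_complex m K" and W: "simplicial_complex m W"
    and j: "j \<in> monomial_ideal m (W - cl (K - W))" and f: "f \<in> SR_ideal m W"
  shows "j * f \<in> SR_ideal m K"
proof -
  have j_carrier: "j \<in> carrier (ZPoly m)"
    using j by (simp add: monomial_ideal_def)
  have f_carrier: "f \<in> carrier (ZPoly m)"
    and f_terms: "\<forall>b\<in>Poly_Mapping.keys f. Poly_Mapping.keys b \<notin> W"
    using f by (simp_all add: SR_ideal_eq[OF W])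
  have W_closed: "\<tau> \<in> W" if "\<tau> \<subseteq> \<rho>" "\<rho> \<in> W" for \<tau> \<rho>
    using W that unfolding simplicial_complex_def by blast
  have "Poly_Mapping.keys c \<notin> K" if c: "c \<in> Poly_Mapping.keys (j * f)" for c
  proof
    assume c_face: "Poly_Mapping.keys c \<in> K"
    obtain a b where ab: "a \<in> Poly_Mapping.keys j" "b \<in> Poly_Mapping.keys f" "c = a + b"
      using c by (rule keys_multE)
    obtain \<sigma> where \<sigma>: "\<sigma> \<in> W - cl (K - W)" "\<sigma> \<subseteq> Poly_Mapping.keys a"
      using j ab(1) by (auto simp: monomial_ideal_def)
    have keys_c: "Poly_Mapping.keys c = Poly_Mapping.keys a \<union> Poly_Mapping.keys b"
      using ab(3) by (simp add: keys_add_exponents)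
    have "Poly_Mapping.keys c \<notin> W"
      using f_terms ab(2) W_closed[of "Poly_Mapping.keys b" "Poly_Mapping.keys c"] keys_c by blast
    then have "\<sigma> \<in> cl (K - W)"
      using c_face \<sigma>(2) keys_c unfolding cl_def by blast
    then show False using \<sigma>(1) by simp
  qed
  then show ?thesis
    using ZPoly_mult_closed[OF j_carrier f_carrier] by (simp add: SR_ideal_eq[OF K])
qed

lemma annihilator_face_term_not_in_cl:
  assumes K: "simplicial_complex m K" and W: "simplicial_complex m W"
    and g: "\<forall>f\<in>SR_ideal m W. g * f \<in> SR_ideal m K"
    and a: "a \<in> Poly_Mapping.keys g" "Poly_Mapping.keys a \<in> K"
  shows "Poly_Mapping.keys a \<notin> cl (K - W)"
proof
  assume "Poly_Mapping.keys a \<in> cl (K - W)"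
  then obtain \<sigma> where \<sigma>: "\<sigma> \<in> K" "\<sigma> \<notin> W" "Poly_Mapping.keys a \<subseteq> \<sigma>"
    by (auto simp: cl_def)
  have \<sigma>_vertices: "\<sigma> \<subseteq> {1..m}" using \<sigma>(1) K by (auto simp: simplicial_complex_def)
  then have \<sigma>_finite: "finite \<sigma>" using finite_subset by blast
  have "xmon \<sigma> \<in> SR_ideal m W"
    using W \<sigma>(2) xmon_mem_carrier_ZPoly[OF \<sigma>_vertices]
    by (simp add: SR_ideal_eq xmon_eq_single[OF \<sigma>_finite] keys_set_exponent[OF \<sigma>_finite])
  then have "g * xmon \<sigma> \<in> SR_ideal m K" using g by blast
  moreover have "a + set_exponent \<sigma> \<in> Poly_Mapping.keys (g * xmon \<sigma>)"
    using a(1) by (simp add: xmon_eq_single \<sigma>_finite in_keys_iff lookup_mult_single_shift)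
  moreover have "Poly_Mapping.keys (a + set_exponent \<sigma>) = \<sigma>"
    using \<sigma>(3) \<sigma>_finite by (auto simp: keys_add_exponents keys_set_exponent)
  ultimately show False using K \<sigma>(1) by (auto simp: SR_ideal_eq)
qed

lemma annihilator_representative_in_monomial_ideal:
  assumes K: "simplicial_complex m K" and W: "simplicial_complex m W"
    and g_carrier: "g \<in> carrier (ZPoly m)" and g: "\<forall>f\<in>SR_ideal m W. g * f \<in> SR_ideal m K"
  shows "\<exists>j\<in>monomial_ideal m (W - cl (K - W)). g - j \<in> SR_ideal m K"
proof -
  obtain j where j: "Poly_Mapping.keys j \<subseteq> {a \<in> Poly_Mapping.keys g. Poly_Mapping.keys a \<in> K}"
    and rest: "Poly_Mapping.keys (g - j) \<subseteq> {a \<in> Poly_Mapping.keys g. Poly_Mapping.keys a \<notin> K}"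
    by (rule poly_mapping_split_keys)
  have "g - j \<in> SR_ideal m K"
    using K g_carrier rest by (auto simp: SR_ideal_eq mem_carrier_ZPoly_iff)
  moreover have "j \<in> monomial_ideal m (W - cl (K - W))"
  proof -
    have "Poly_Mapping.keys a \<in> W - cl (K - W)" if "a \<in> Poly_Mapping.keys j" for a
      using that j annihilator_face_term_not_in_cl[OF K W g] unfolding cl_def by blast
    then show ?thesis
      using g_carrier j by (auto simp: monomial_ideal_def mem_carrier_ZPoly_iff)
  qed
  ultimately show ?thesis by blast
qed

lemma rcos_image_SR_annihilating_eq_monomial_ideal:
  assumes K: "simplicial_complex m K" and W: "simplicial_complex m W"
  shows "(+>\<^bsub>ZPoly m\<^esub>) (SR_ideal m K) ` {g \<in> carrier (ZPoly m). \<forall>f\<in>SR_ideal m W. g * f \<in> SR_ideal m K}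
       = (+>\<^bsub>ZPoly m\<^esub>) (SR_ideal m K) ` monomial_ideal m (W - cl (K - W))"
proof (rule ring.rcos_image_eq_of_representatives[OF cring.axioms(1)[OF cring_ZPoly] ideal_SR_ideal])
  show "monomial_ideal m (W - cl (K - W))
      \<subseteq> {g \<in> carrier (ZPoly m). \<forall>f\<in>SR_ideal m W. g * f \<in> SR_ideal m K}"
    using monomial_ideal_annihilates_SR_ideal[OF K W] by (auto simp: monomial_ideal_def)
next
  fix g assume "g \<in> {g \<in> carrier (ZPoly m). \<forall>f\<in>SR_ideal m W. g * f \<in> SR_ideal m K}"
  then show "\<exists>j\<in>monomial_ideal m (W - cl (K - W)). g \<ominus>\<^bsub>ZPoly m\<^esub> j \<in> SR_ideal m K"
    using annihilator_representative_in_monomial_ideal[OF K W]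
    by (auto simp: a_minus_ZPoly monomial_ideal_def)
qed blast

theorem lemma4p5:
  fixes m :: nat and K W :: "nat set set"
  assumes "simplicial_complex m K"
    and "simplicial_complex m W"
    and "W \<subseteq> K"
  shows "annihilator (SR_ring m K)
           (a_kernel (SR_ring m K) (SR_ring m W) (SR_restrict m W))
         = Idl\<^bsub>SR_ring m K\<^esub> (SR_xmon m K ` (W - cl (K - W)))"
proof -
  interpret P: cring "ZPoly m" by (rule cring_ZPoly)
  let ?IK = "SR_ideal m K" and ?IW = "SR_ideal m W"
  have IK: "ideal ?IK (ZPoly m)" and IW: "ideal ?IW (ZPoly m)"
    by (rule ideal_SR_ideal)+
  have "a_kernel (SR_ring m K) (SR_ring m W) (SR_restrict m W) = (+>\<^bsub>ZPoly m\<^esub>) ?IK ` ?IW"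
    using P.a_kernel_quotient_map[OF IK IW SR_ideal_antimono[OF assms]]
    by (simp add: SR_ring_def SR_restrict_def[abs_def])
  then have "annihilator (SR_ring m K) (a_kernel (SR_ring m K) (SR_ring m W) (SR_restrict m W))
      = (+>\<^bsub>ZPoly m\<^esub>) ?IK ` {g \<in> carrier (ZPoly m). \<forall>f\<in>?IW. g * f \<in> ?IK}"
    using P.annihilator_quotient[OF IK] ideal.Icarr[OF IW] by (simp add: SR_ring_def subset_eq)
  also have "\<dots> = (+>\<^bsub>ZPoly m\<^esub>) ?IK ` monomial_ideal m (W - cl (K - W))"
    by (rule rcos_image_SR_annihilating_eq_monomial_ideal[OF assms(1,2)])
  also have "\<dots> = Idl\<^bsub>SR_ring m K\<^esub> (SR_xmon m K ` (W - cl (K - W)))"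
    using assms(2) by (intro genideal_SR_xmon[symmetric]) (auto simp: simplicial_complex_def)
  finally show ?thesis .
qed

end
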